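(* Let $S$ be a connected graded reduced affine monoid. Then the graded catenary degree $c_{\mathrm{gr}}(S)$ is the minimal non-negative integer $d$ such that there exists a subset $\Lambda\subset M\times M$ generating the semigroup congruence $\sim_S$ with $|\alpha|_{\mathrm{gr}}\le d$ and $|\gamma|_{\mathrm{gr}}\le d$ for all $(x^{\alpha},x^{\gamma})\in\Lambda$.
   Context: A monoid is a commutative cancellative semigroup with identity; affine means a finitely generated submonoid of a finitely generated free abelian group; reduced means the identity is the only unit. $S$ is graded if $S$ is the disjoint union of subsets $S_d$, $d\in\mathbb{N}_0$, with $S_dS_e\subseteq S_{d+e}$; write $|s|=d$ for $s\in S_d$; connected graded means $S_0=\{1\}$. $\mathcal{A}(S)$ is the finite set of atoms; $a^{\alpha}=\prod_a a^{\alpha(a)}$ for $\alpha\in\mathbb{N}_0^{\mathcal{A}(S)}$. $M$ is the free commutative monoid on indeterminates $x_a$ ($a\in\mathcal{A}(S)$), with elements $x^{\alpha}$, and $\sim_S$ is the congruence on $M$ with $x^{\alpha}\sim_S x^{\gamma}$ iff $a^{\alpha}=a^{\gamma}$. Set $|\alpha|_{\mathrm{gr}}=\sum_a\alpha(a)|a|$, $\gcd(\alpha,\gamma)(a)=\min\{\alpha(a),\gamma(a)\}$, and $d_{\mathrm{gr}}(\alpha,\gamma)=\max\{|\alpha-\gcd(\alpha,\gamma)|_{\mathrm{gr}},|\gamma-\gcd(\alpha,\gamma)|_{\mathrm{gr}}\}$. The graded catenary degree $c_{\mathrm{gr}}(S)$ is the minimal $d$ such that whenever $a^{\alpha}=a^{\gamma}$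 there is a sequence $\alpha=\alpha^{(0)},\dots,\alpha^{(k)}=\gamma$ in $\mathbb{N}_0^{\mathcal{A}(S)}$ with $a^{\alpha^{(j)}}=a^{\alpha^{(j+1)}}$ and $d_{\mathrm{gr}}(\alpha^{(j)},\alpha^{(j+1)})\le d$ for all $j$. *)

theory Defs
  imports Main
begin

text \<open>Monoids are modelled additively inside the free abelian group \<open>\<int>^'i\<close>
  (functions \<open>'i \<Rightarrow> int\<close>, \<open>'i\<close> a finite type); the identity is \<open>0\<close>.\<close>

definition vzero :: "'i \<Rightarrow> int" where "vzero = (\<lambda>i. 0)"
definition vadd :: "('i \<Rightarrow> int) \<Rightarrow> ('i \<Rightarrow> int) \<Rightarrow> ('i \<Rightarrow> int)"
  where "vadd x y = (\<lambda>i. x i + y i)"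

inductive_set mon_gen :: "('i \<Rightarrow> int) set \<Rightarrow> ('i \<Rightarrow> int) set" for G where
  zero: "vzero \<in> mon_gen G"
| gen: "g \<in> G \<Longrightarrow> x \<in> mon_gen G \<Longrightarrow> vadd g x \<in> mon_gen G"

definition affine_monoid :: "('i::finite \<Rightarrow> int) set \<Rightarrow> bool" where
  "affine_monoid S \<longleftrightarrow> (\<exists>G. finite G \<and> S = mon_gen G)"

definition units_of_monoid :: "('i \<Rightarrow> int) set \<Rightarrow> ('i \<Rightarrow> int) set" where
  "units_of_monoid S = {u \<in> S. \<exists>v\<in>S. vadd u v = vzero}"

definition reduced :: "('i \<Rightarrow> int) set \<Rightarrow> bool" where
  "reduced S \<longleftrightarrow> units_of_monoid S = {vzero}"

text \<open>Grading: \<open>S_d = {s \<in> S. deg s = d}\<close>; \<open>S_d S_e \<subseteq> S_(d+e)\<close> means additivity of deg.\<close>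
definition graded :: "('i \<Rightarrow> int) set \<Rightarrow> (('i \<Rightarrow> int) \<Rightarrow> nat) \<Rightarrow> bool" where
  "graded S deg \<longleftrightarrow> (\<forall>x\<in>S. \<forall>y\<in>S. deg (vadd x y) = deg x + deg y)"

definition connected_graded :: "('i \<Rightarrow> int) set \<Rightarrow> (('i \<Rightarrow> int) \<Rightarrow> nat) \<Rightarrow> bool" where
  "connected_graded S deg \<longleftrightarrow> graded S deg \<and> {s \<in> S. deg s = 0} = {vzero}"

definition atoms :: "('i \<Rightarrow> int) set \<Rightarrow> ('i \<Rightarrow> int) set" where
  "atoms S = {a \<in> S. a \<notin> units_of_monoid S \<and>
      (\<forall>b\<in>S. \<forall>c\<in>S. a = vadd b c \<longrightarrow> b \<in> units_of_monoid S \<or> c \<in> units_of_monoid S)}"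

text \<open>The free commutative monoid \<open>M\<close> on the indeterminates \<open>x_a\<close>, \<open>a\<close> an atom:
  exponent vectors \<open>\<alpha> \<in> \<nat>_0^{A(S)}\<close>, i.e. functions vanishing outside the atoms.\<close>
definition freeM :: "('i \<Rightarrow> int) set \<Rightarrow> (('i \<Rightarrow> int) \<Rightarrow> nat) set" where
  "freeM S = {\<alpha>. \<forall>a. a \<notin> atoms S \<longrightarrow> \<alpha> a = 0}"

definition madd :: "(('i \<Rightarrow> int) \<Rightarrow> nat) \<Rightarrow> (('i \<Rightarrow> int) \<Rightarrow> nat) \<Rightarrow> (('i \<Rightarrow> int) \<Rightarrow> nat)"
  where "madd \<alpha> \<beta> = (\<lambda>a. \<alpha> a + \<beta> a)"

definition aeval :: "('i \<Rightarrow> int) set \<Rightarrow> (('i \<Rightarrow> int) \<Rightarrow> nat) \<Rightarrow> ('i \<Rightarrow> int)" where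
  "aeval S \<alpha> = (\<lambda>i. \<Sum>a\<in>atoms S. int (\<alpha> a) * a i)"

definition simS :: "('i \<Rightarrow> int) set \<Rightarrow> ((('i \<Rightarrow> int) \<Rightarrow> nat) \<times> (('i \<Rightarrow> int) \<Rightarrow> nat)) set" where
  "simS S = {(\<alpha>, \<gamma>). \<alpha> \<in> freeM S \<and> \<gamma> \<in> freeM S \<and> aeval S \<alpha> = aeval S \<gamma>}"

definition is_congruence :: "('i \<Rightarrow> int) set \<Rightarrow> ((('i \<Rightarrow> int) \<Rightarrow> nat) \<times> (('i \<Rightarrow> int) \<Rightarrow> nat)) set \<Rightarrow> bool" where
  "is_congruence S R \<longleftrightarrow> equiv (freeM S) R \<and>
     (\<forall>\<alpha> \<gamma> \<beta>. (\<alpha>, \<gamma>) \<in> R \<longrightarrow> \<beta> \<in> freeM S \<longrightarrow> (madd \<alpha> \<beta>, madd \<gamma> \<beta>) \<in> R)"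

definition cong_gen :: "('i \<Rightarrow> int) set \<Rightarrow> ((('i \<Rightarrow> int) \<Rightarrow> nat) \<times> (('i \<Rightarrow> int) \<Rightarrow> nat)) set
    \<Rightarrow> ((('i \<Rightarrow> int) \<Rightarrow> nat) \<times> (('i \<Rightarrow> int) \<Rightarrow> nat)) set" where
  "cong_gen S \<Lambda> = \<Inter> {R. is_congruence S R \<and> \<Lambda> \<subseteq> R}"

definition gr_deg :: "('i \<Rightarrow> int) set \<Rightarrow> (('i \<Rightarrow> int) \<Rightarrow> nat) \<Rightarrow> (('i \<Rightarrow> int) \<Rightarrow> nat) \<Rightarrow> nat" where
  "gr_deg S deg \<alpha> = (\<Sum>a\<in>atoms S. \<alpha> a * deg a)"

definition mgcd :: "(('i \<Rightarrow> int) \<Rightarrow> nat) \<Rightarrow> (('i \<Rightarrow> int) \<Rightarrow> nat) \<Rightarrow> (('i \<Rightarrow> int) \<Rightarrow> nat)"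
  where "mgcd \<alpha> \<gamma> = (\<lambda>a. min (\<alpha> a) (\<gamma> a))"

definition d_gr :: "('i \<Rightarrow> int) set \<Rightarrow> (('i \<Rightarrow> int) \<Rightarrow> nat) \<Rightarrow> (('i \<Rightarrow> int) \<Rightarrow> nat)
    \<Rightarrow> (('i \<Rightarrow> int) \<Rightarrow> nat) \<Rightarrow> nat" where
  "d_gr S deg \<alpha> \<gamma> = max (gr_deg S deg (\<lambda>a. \<alpha> a - mgcd \<alpha> \<gamma> a))
                          (gr_deg S deg (\<lambda>a. \<gamma> a - mgcd \<alpha> \<gamma> a))"

definition has_gr_chains :: "('i \<Rightarrow> int) set \<Rightarrow> (('i \<Rightarrow> int) \<Rightarrow> nat) \<Rightarrow> nat \<Rightarrow> bool" where
  "has_gr_chains S deg d \<longleftrightarrow>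
     (\<forall>\<alpha>\<in>freeM S. \<forall>\<gamma>\<in>freeM S. aeval S \<alpha> = aeval S \<gamma> \<longrightarrow>
        (\<exists>cs. cs \<noteq> [] \<and> hd cs = \<alpha> \<and> last cs = \<gamma> \<and> set cs \<subseteq> freeM S \<and>
           (\<forall>j. Suc j < length cs \<longrightarrow>
               aeval S (cs ! j) = aeval S (cs ! Suc j) \<and> d_gr S deg (cs ! j) (cs ! Suc j) \<le> d)))"

definition c_gr :: "('i \<Rightarrow> int) set \<Rightarrow> (('i \<Rightarrow> int) \<Rightarrow> nat) \<Rightarrow> nat" where
  "c_gr S deg = (LEAST d. has_gr_chains S deg d)"

end

theory Submission
  imports Defs "HOL-Library.Product_Order"
begin

text \<open>Let \<open>\<Lambda>_d\<close> be the set of relations \<open>a^\<alpha> = a^\<gamma>\<close> with \<open>|\<alpha>|_gr, |\<gamma>|_gr \<le> d\<close>.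
  A step of distance at most \<open>d\<close> between two factorizations is, after splitting off their
  \<open>gcd\<close>, a translate of a pair of \<open>\<Lambda>_d\<close>, so it lies in every congruence containing \<open>\<Lambda>_d\<close>;
  conversely the pairs joined by chains of such steps form a congruence containing \<open>\<Lambda>_d\<close>.
  Hence \<open>c_gr(S)\<close> is the least \<open>d\<close> for which \<open>\<Lambda>_d\<close> generates \<open>\<sim>_S\<close>, and every generating
  set with degrees at most \<open>d\<close> is contained in \<open>\<Lambda>_d\<close>.  That some \<open>d\<close> works at all is
  Redei's theorem: by Dickson's lemma every non-trivial relation dominates one of finitely
  many, and removing it shortens the relation.\<close>

lemma madd_commute: "madd \<alpha> \<beta> = madd \<beta> \<alpha>"
  by (simp add: madd_def fun_eq_iff)

lemma aeval_madd: "aeval S (madd \<alpha> \<beta>) = vadd (aeval S \<alpha>) (aeval S \<beta>)"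
  by (simp add: aeval_def madd_def vadd_def distrib_right sum.distrib fun_eq_iff)

lemma madd_freeM: "\<alpha> \<in> freeM S \<Longrightarrow> \<beta> \<in> freeM S \<Longrightarrow> madd \<alpha> \<beta> \<in> freeM S"
  by (simp add: freeM_def madd_def)

lemma madd_freeM_right: "madd \<alpha> \<beta> \<in> freeM S \<Longrightarrow> \<beta> \<in> freeM S"
  by (simp add: freeM_def madd_def)

lemma diff_freeM: "\<alpha> \<in> freeM S \<Longrightarrow> \<alpha> - \<beta> \<in> freeM S"
  by (simp add: freeM_def)

lemma madd_diff_cancel: "\<beta> \<le> \<alpha> \<Longrightarrow> madd \<beta> (\<alpha> - \<beta>) = \<alpha>"
  by (simp add: madd_def le_fun_def fun_eq_iff)

lemma gr_deg_mono: "\<alpha> \<le> \<beta> \<Longrightarrow> gr_deg S deg \<alpha> \<le> gr_deg S deg \<beta>"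
  unfolding gr_deg_def le_fun_def by (intro sum_mono mult_right_mono) auto

lemma d_gr_le_max: "d_gr S deg \<alpha> \<gamma> \<le> max (gr_deg S deg \<alpha>) (gr_deg S deg \<gamma>)"
  unfolding d_gr_def by (intro max.mono gr_deg_mono) (auto simp: le_fun_def)

lemma d_gr_madd_right: "d_gr S deg (madd \<alpha> \<beta>) (madd \<gamma> \<beta>) = d_gr S deg \<alpha> \<gamma>"
  by (simp add: d_gr_def madd_def mgcd_def min_add_distrib_left[symmetric])

lemma simS_madd_cancel:
  assumes "(madd \<alpha> \<beta>, madd \<gamma> \<delta>) \<in> simS S" and "(\<alpha>, \<gamma>) \<in> simS S"
  shows "(\<beta>, \<delta>) \<in> simS S"
  using assms by (auto simp: simS_def aeval_madd vadd_def fun_eq_iff dest: madd_freeM_right)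

definition bounded_relations :: "('i \<Rightarrow> int) set \<Rightarrow> (('i \<Rightarrow> int) \<Rightarrow> nat) \<Rightarrow> nat
    \<Rightarrow> ((('i \<Rightarrow> int) \<Rightarrow> nat) \<times> (('i \<Rightarrow> int) \<Rightarrow> nat)) set" where
  "bounded_relations S deg d = {(\<alpha>, \<gamma>) \<in> simS S. gr_deg S deg \<alpha> \<le> d \<and> gr_deg S deg \<gamma> \<le> d}"

definition gr_step :: "('i \<Rightarrow> int) set \<Rightarrow> (('i \<Rightarrow> int) \<Rightarrow> nat) \<Rightarrow> nat
    \<Rightarrow> ((('i \<Rightarrow> int) \<Rightarrow> nat) \<times> (('i \<Rightarrow> int) \<Rightarrow> nat)) set" where
  "gr_step S deg d = {(\<alpha>, \<gamma>) \<in> simS S. d_gr S deg \<alpha> \<gamma> \<le> d}"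

lemma bounded_relations_subset_gr_step: "bounded_relations S deg d \<subseteq> gr_step S deg d"
  by (auto simp: bounded_relations_def gr_step_def intro: order_trans[OF d_gr_le_max])

lemma gr_step_subset: "gr_step S deg d \<subseteq> freeM S \<times> freeM S"
  by (auto simp: gr_step_def simS_def)

lemma gr_step_sym: "sym (gr_step S deg d)"
  by (auto simp: sym_def gr_step_def simS_def d_gr_def mgcd_def min.commute max.commute)

lemma gr_step_madd_right:
  "(\<alpha>, \<gamma>) \<in> gr_step S deg d \<Longrightarrow> \<beta> \<in> freeM S \<Longrightarrow> (madd \<alpha> \<beta>, madd \<gamma> \<beta>) \<in> gr_step S deg d"
  by (auto simp: gr_step_def simS_def d_gr_madd_right madd_freeM aeval_madd)

lemma rtrancl_gr_step_madd_right:
  assumes "(\<alpha>, \<gamma>) \<in> (gr_step S deg d)\<^sup>*" and "\<beta> \<in> freeM S"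
  shows "(madd \<alpha> \<beta>, madd \<gamma> \<beta>) \<in> (gr_step S deg d)\<^sup>*"
  using assms(1)
proof (induction rule: rtrancl_induct)
  case (step \<gamma> \<delta>)
  then show ?case
    using gr_step_madd_right[OF _ assms(2)] by (blast intro: rtrancl_into_rtrancl)
qed simp

lemma gr_step_decompose:
  assumes "(\<alpha>, \<gamma>) \<in> gr_step S deg d"
  obtains u v \<beta> where "\<alpha> = madd u \<beta>" and "\<gamma> = madd v \<beta>" and "\<beta> \<in> freeM S"
    and "(u, v) \<in> bounded_relations S deg d"
proof
  let ?\<beta> = "mgcd \<alpha> \<gamma>"
  have "?\<beta> \<le> \<alpha>" "?\<beta> \<le> \<gamma>"
    by (simp_all add: mgcd_def le_fun_def)
  then show \<alpha>: "\<alpha> = madd (\<alpha> - ?\<beta>) ?\<beta>" and \<gamma>: "\<gamma> = madd (\<gamma> - ?\<beta>) ?\<beta>"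
    by (simp_all add: madd_diff_cancel madd_commute)
  have "(\<alpha>, \<gamma>) \<in> simS S" "d_gr S deg \<alpha> \<gamma> \<le> d"
    using assms by (simp_all add: gr_step_def)
  then show "?\<beta> \<in> freeM S"
    by (auto simp: simS_def freeM_def mgcd_def)
  have "(?\<beta>, ?\<beta>) \<in> simS S"
    using \<open>?\<beta> \<in> freeM S\<close> by (simp add: simS_def)
  with \<open>(\<alpha>, \<gamma>) \<in> simS S\<close> have "(\<alpha> - ?\<beta>, \<gamma> - ?\<beta>) \<in> simS S"
    using simS_madd_cancel \<alpha> \<gamma> madd_commute by metis
  with \<open>d_gr S deg \<alpha> \<gamma> \<le> d\<close> show "(\<alpha> - ?\<beta>, \<gamma> - ?\<beta>) \<in> bounded_relations S deg d"
    by (simp add: bounded_relations_def d_gr_def fun_diff_def)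
qed

lemma rtrancl_if_successively:
  "cs \<noteq> [] \<Longrightarrow> successively (\<lambda>x y. (x, y) \<in> R) cs \<Longrightarrow> (hd cs, last cs) \<in> R\<^sup>*"
  by (induction "\<lambda>x y. (x, y) \<in> R" cs rule: successively.induct)
     (auto intro: converse_rtrancl_into_rtrancl)

lemma successively_if_rtrancl:
  assumes "(x, y) \<in> R\<^sup>*" and "R \<subseteq> A \<times> A" and "x \<in> A"
  shows "\<exists>cs. cs \<noteq> [] \<and> hd cs = x \<and> last cs = y \<and> set cs \<subseteq> A \<and>
           successively (\<lambda>x y. (x, y) \<in> R) cs"
  using assms(1,3)
proof (induction rule: converse_rtrancl_induct)
  case base
  then show ?case by (intro exI[of _ "[y]"]) simp
next
  case (step x z)
  then obtain cs where "cs \<noteq> []" "hd cs = z" "last cs = y" "set cs \<subseteq> A"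
      "successively (\<lambda>x y. (x, y) \<in> R) cs"
    using assms(2) by blast
  with step show ?case
    by (intro exI[of _ "x # cs"]) (auto simp: successively_Cons)
qed

lemma has_gr_chains_iff_rtrancl:
  "has_gr_chains S deg d \<longleftrightarrow> simS S \<subseteq> (gr_step S deg d)\<^sup>*"
proof -
  let ?R = "\<lambda>\<alpha> \<gamma>. (\<alpha>, \<gamma>) \<in> gr_step S deg d"
  let ?chain = "\<lambda>\<alpha> \<gamma> cs. cs \<noteq> [] \<and> hd cs = \<alpha> \<and> last cs = \<gamma> \<and> set cs \<subseteq> freeM S \<and>
    successively ?R cs"
  have step_iff: "successively ?R cs \<longleftrightarrow> (\<forall>j. Suc j < length cs \<longrightarrow>
      aeval S (cs ! j) = aeval S (cs ! Suc j) \<and> d_gr S deg (cs ! j) (cs ! Suc j) \<le> d)"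
    if "set cs \<subseteq> freeM S" for cs
  proof -
    have "cs ! j \<in> freeM S" if "j < length cs" for j
      using \<open>set cs \<subseteq> freeM S\<close> nth_mem[OF that] by blast
    then show ?thesis
      by (auto simp: successively_conv_nth gr_step_def simS_def)
  qed
  have "has_gr_chains S deg d \<longleftrightarrow> (\<forall>\<alpha>\<in>freeM S. \<forall>\<gamma>\<in>freeM S.
      aeval S \<alpha> = aeval S \<gamma> \<longrightarrow> (\<exists>cs. ?chain \<alpha> \<gamma> cs))"
    unfolding has_gr_chains_def by (simp only: step_iff cong: conj_cong)
  also have "\<dots> \<longleftrightarrow> simS S \<subseteq> (gr_step S deg d)\<^sup>*"
  proof
    assume chains: "\<forall>\<alpha>\<in>freeM S. \<forall>\<gamma>\<in>freeM S. aeval S \<alpha> = aeval S \<gamma> \<longrightarrow> (\<exists>cs. ?chain \<alpha> \<gamma> cs)"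
    show "simS S \<subseteq> (gr_step S deg d)\<^sup>*"
    proof clarify
      fix \<alpha> \<gamma>
      assume "(\<alpha>, \<gamma>) \<in> simS S"
      with chains obtain cs where "cs \<noteq> []" "hd cs = \<alpha>" "last cs = \<gamma>" "successively ?R cs"
        unfolding simS_def by blast
      then show "(\<alpha>, \<gamma>) \<in> (gr_step S deg d)\<^sup>*"
        using rtrancl_if_successively[of cs] by simp
    qed
  next
    assume relations: "simS S \<subseteq> (gr_step S deg d)\<^sup>*"
    show "\<forall>\<alpha>\<in>freeM S. \<forall>\<gamma>\<in>freeM S. aeval S \<alpha> = aeval S \<gamma> \<longrightarrow> (\<exists>cs. ?chain \<alpha> \<gamma> cs)"
    proof (intro ballI impI)
      fix \<alpha> \<gamma>
      assume "\<alpha> \<in> freeM S" "\<gamma> \<in> freeM S" "aeval S \<alpha> = aeval S \<gamma>"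
      with relations have "(\<alpha>, \<gamma>) \<in> (gr_step S deg d)\<^sup>*"
        by (auto simp: simS_def)
      from successively_if_rtrancl[OF this gr_step_subset \<open>\<alpha> \<in> freeM S\<close>]
      show "\<exists>cs. ?chain \<alpha> \<gamma> cs" .
    qed
  qed
  finally show ?thesis .
qed

lemma is_congruence_simS: "is_congruence S (simS S)"
  unfolding is_congruence_def
proof (intro conjI allI impI)
  show "equiv (freeM S) (simS S)"
    by (intro equivI) (auto simp: simS_def refl_on_def sym_def trans_def)
  show "(madd \<alpha> \<beta>, madd \<gamma> \<beta>) \<in> simS S" if "(\<alpha>, \<gamma>) \<in> simS S" "\<beta> \<in> freeM S" for \<alpha> \<gamma> \<beta>
    using that by (simp add: simS_def madd_freeM aeval_madd)
qed

lemma is_congruence_rtrancl_gr_step: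
  "is_congruence S ((gr_step S deg d)\<^sup>* \<inter> freeM S \<times> freeM S)"
  unfolding is_congruence_def
proof (intro conjI allI impI)
  show "equiv (freeM S) ((gr_step S deg d)\<^sup>* \<inter> freeM S \<times> freeM S)"
  proof (rule equivI)
    show "refl_on (freeM S) ((gr_step S deg d)\<^sup>* \<inter> freeM S \<times> freeM S)"
      by (auto simp: refl_on_def)
    show "(gr_step S deg d)\<^sup>* \<inter> freeM S \<times> freeM S \<subseteq> freeM S \<times> freeM S"
      by blast
    have "sym (freeM S \<times> freeM S)" "trans (freeM S \<times> freeM S)"
      by (auto simp: sym_def trans_def)
    then show "sym ((gr_step S deg d)\<^sup>* \<inter> freeM S \<times> freeM S)"
      and "trans ((gr_step S deg d)\<^sup>* \<inter> freeM S \<times> freeM S)"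
      by (simp_all add: sym_Int sym_rtrancl gr_step_sym trans_Int trans_rtrancl)
  qed
next
  fix \<alpha> \<gamma> \<beta>
  assume "(\<alpha>, \<gamma>) \<in> (gr_step S deg d)\<^sup>* \<inter> freeM S \<times> freeM S" and "\<beta> \<in> freeM S"
  then show "(madd \<alpha> \<beta>, madd \<gamma> \<beta>) \<in> (gr_step S deg d)\<^sup>* \<inter> freeM S \<times> freeM S"
    by (auto simp: rtrancl_gr_step_madd_right madd_freeM)
qed

lemma subset_cong_gen: "\<Lambda> \<subseteq> cong_gen S \<Lambda>"
  by (auto simp: cong_gen_def)

lemma subset_cong_genI:
  "(\<And>R. is_congruence S R \<Longrightarrow> \<Lambda> \<subseteq> R \<Longrightarrow> A \<subseteq> R) \<Longrightarrow> A \<subseteq> cong_gen S \<Lambda>"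
  by (auto simp: cong_gen_def)

lemma cong_gen_least: "is_congruence S R \<Longrightarrow> \<Lambda> \<subseteq> R \<Longrightarrow> cong_gen S \<Lambda> \<subseteq> R"
  by (auto simp: cong_gen_def)

lemma cong_gen_mono: "\<Lambda> \<subseteq> \<Lambda>' \<Longrightarrow> cong_gen S \<Lambda> \<subseteq> cong_gen S \<Lambda>'"
  by (auto simp: cong_gen_def)

lemma rtrancl_gr_step_subset_congruence:
  assumes R: "is_congruence S R" "bounded_relations S deg d \<subseteq> R"
  shows "(gr_step S deg d)\<^sup>* \<inter> freeM S \<times> freeM S \<subseteq> R"
proof clarify
  fix \<alpha> \<gamma>
  assume "(\<alpha>, \<gamma>) \<in> (gr_step S deg d)\<^sup>*" and "\<alpha> \<in> freeM S"
  then show "(\<alpha>, \<gamma>) \<in> R"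
  proof (induction rule: rtrancl_induct)
    case base
    with R(1) show ?case
      by (auto simp: is_congruence_def equiv_def refl_on_def)
  next
    case (step \<gamma> \<delta>)
    obtain u v \<beta> where "\<gamma> = madd u \<beta>" "\<delta> = madd v \<beta>" "\<beta> \<in> freeM S"
      and "(u, v) \<in> bounded_relations S deg d"
      using gr_step_decompose[OF step.hyps(2)] .
    with R have "(\<gamma>, \<delta>) \<in> R"
      unfolding is_congruence_def by blast
    with step.IH step.prems R(1) show ?case
      unfolding is_congruence_def equiv_def trans_def by blast
  qed
qed

lemma cong_gen_bounded_relations_subset_simS:
  "cong_gen S (bounded_relations S deg d) \<subseteq> simS S"
  by (rule cong_gen_least[OF is_congruence_simS]) (auto simp: bounded_relations_def)

lemma has_gr_chains_iff_cong_gen: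
  "has_gr_chains S deg d \<longleftrightarrow> cong_gen S (bounded_relations S deg d) = simS S"
proof
  assume "has_gr_chains S deg d"
  then have chains: "simS S \<subseteq> (gr_step S deg d)\<^sup>* \<inter> freeM S \<times> freeM S"
    by (auto simp: has_gr_chains_iff_rtrancl simS_def)
  have "simS S \<subseteq> cong_gen S (bounded_relations S deg d)"
  proof (rule subset_cong_genI)
    fix R
    assume "is_congruence S R" "bounded_relations S deg d \<subseteq> R"
    then have "(gr_step S deg d)\<^sup>* \<inter> freeM S \<times> freeM S \<subseteq> R"
      by (rule rtrancl_gr_step_subset_congruence)
    with chains show "simS S \<subseteq> R"
      by (rule subset_trans)
  qed
  with cong_gen_bounded_relations_subset_simS
  show "cong_gen S (bounded_relations S deg d) = simS S" ..
next
  have "bounded_relations S deg d \<subseteq> (gr_step S deg d)\<^sup>* \<inter> freeM S \<times> freeM S"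
    using bounded_relations_subset_gr_step gr_step_subset by blast
  then have "cong_gen S (bounded_relations S deg d) \<subseteq> (gr_step S deg d)\<^sup>*"
    using cong_gen_least[OF is_congruence_rtrancl_gr_step] by blast
  moreover assume "cong_gen S (bounded_relations S deg d) = simS S"
  ultimately show "has_gr_chains S deg d"
    by (simp add: has_gr_chains_iff_rtrancl)
qed

lemma cong_gen_bounded_relations_if_generated:
  assumes "cong_gen S \<Lambda> = simS S"
    and "\<forall>(\<alpha>, \<gamma>) \<in> \<Lambda>. gr_deg S deg \<alpha> \<le> d \<and> gr_deg S deg \<gamma> \<le> d"
  shows "cong_gen S (bounded_relations S deg d) = simS S"
proof -
  have "\<Lambda> \<subseteq> simS S"
    using subset_cong_gen[of \<Lambda> S] assms(1) by simp
  with assms(2) have "\<Lambda> \<subseteq> bounded_relations S deg d"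
    unfolding bounded_relations_def by blast
  then have "simS S \<subseteq> cong_gen S (bounded_relations S deg d)"
    using cong_gen_mono assms(1) by metis
  with cong_gen_bounded_relations_subset_simS show ?thesis ..
qed

definition finitely_based :: "'a::ord set \<Rightarrow> bool" where
  "finitely_based X \<longleftrightarrow> (\<exists>F \<subseteq> X. finite F \<and> (\<forall>x \<in> X. \<exists>f \<in> F. f \<le> x))"

lemma finitely_based_Un:
  assumes "finitely_based X" and "finitely_based Y"
  shows "finitely_based (X \<union> Y)"
proof -
  from assms(1) obtain F where F: "F \<subseteq> X" "finite F" "\<forall>x \<in> X. \<exists>f \<in> F. f \<le> x"
    unfolding finitely_based_def by auto
  from assms(2) obtain G where G: "G \<subseteq> Y" "finite G" "\<forall>y \<in> Y. \<exists>g \<in> G. g \<le> y"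
    unfolding finitely_based_def by auto
  have "\<forall>z \<in> X \<union> Y. \<exists>f \<in> F \<union> G. f \<le> z"
    using F(3) G(3) by auto
  with F(1,2) G(1,2) show ?thesis
    unfolding finitely_based_def by (intro exI[of _ "F \<union> G"]) auto
qed

lemma finitely_based_UN:
  assumes "finite I" and "\<And>i. i \<in> I \<Longrightarrow> finitely_based (X i)"
  shows "finitely_based (\<Union>i \<in> I. X i)"
proof -
  from assms(2) have "\<forall>i \<in> I. \<exists>F. F \<subseteq> X i \<and> finite F \<and> (\<forall>x \<in> X i. \<exists>f \<in> F. f \<le> x)"
    unfolding finitely_based_def by auto
  from bchoice[OF this] obtain F
    where F: "\<forall>i \<in> I. F i \<subseteq> X i \<and> finite (F i) \<and> (\<forall>x \<in> X i. \<exists>f \<in> F i. f \<le> x)" ..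
  have "\<forall>x \<in> (\<Union>i \<in> I. X i). \<exists>f \<in> (\<Union>i \<in> I. F i). f \<le> x"
    using F by fastforce
  with F assms(1) show ?thesis
    unfolding finitely_based_def by (intro exI[of _ "\<Union>i \<in> I. F i"]) auto
qed

lemma finitely_based_reflect:
  assumes "finitely_based (h ` X)" and "\<And>x y. x \<in> X \<Longrightarrow> y \<in> X \<Longrightarrow> h x \<le> h y \<Longrightarrow> x \<le> y"
  shows "finitely_based X"
proof -
  obtain G where G: "G \<subseteq> h ` X" "finite G" "\<forall>y \<in> h ` X. \<exists>g \<in> G. g \<le> y"
    using assms(1) unfolding finitely_based_def by auto
  obtain F where F: "F \<subseteq> X" "finite F" "G = h ` F"
    using finite_subset_image[OF G(2,1)] by auto
  have "\<exists>f \<in> F. f \<le> x" if "x \<in> X" for x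
  proof -
    obtain g where "g \<in> G" "g \<le> h x"
      using G(3) \<open>x \<in> X\<close> by auto
    then obtain f where "f \<in> F" "h f \<le> h x"
      using F(3) by auto
    then show ?thesis
      using assms(2) F(1) \<open>x \<in> X\<close> by auto
  qed
  with F(1,2) show ?thesis
    unfolding finitely_based_def by auto
qed

lemma finitely_based_finite_support:
  fixes X :: "('a \<Rightarrow> nat) set"
  assumes "finite A" and "\<forall>x \<in> X. \<forall>a. a \<notin> A \<longrightarrow> x a = 0"
  shows "finitely_based X"
  using assms
proof (induction A arbitrary: X rule: finite_psubset_induct)
  case (psubset A)
  show ?case
  proof (cases "X = {}")
    case True
    then show ?thesis by (simp add: finitely_based_def)
  next
    case False
    then obtain x\<^sub>0 where "x\<^sub>0 \<in> X" by blast
    have slice: "finitely_based {x \<in> X. x b = k}" if "b \<in> A" for b k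
    proof (rule finitely_based_reflect[where h = "\<lambda>x. x(b := 0)"])
      show "finitely_based ((\<lambda>x. x(b := 0)) ` {x \<in> X. x b = k})"
        using psubset.prems that by (intro psubset.IH[of "A - {b}"]) auto
      show "x \<le> y" if "x \<in> {x \<in> X. x b = k}" "y \<in> {x \<in> X. x b = k}" "x(b := 0) \<le> y(b := 0)"
        for x y
      proof (rule le_funI)
        fix i
        show "x i \<le> y i"
          using that le_funD[OF that(3), of i] by (cases "i = b") auto
      qed
    qed
    let ?above = "{x \<in> X. x\<^sub>0 \<le> x}"
    let ?slices = "\<Union>(b, k) \<in> Sigma A (\<lambda>b. {..<x\<^sub>0 b}). {x \<in> X. x b = k}"
    have "x \<in> ?above \<union> ?slices" if "x \<in> X" for x
    proof (cases "x\<^sub>0 \<le> x")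
      case False
      then obtain b where "x b < x\<^sub>0 b"
        by (auto simp: le_fun_def not_le)
      moreover from this have "b \<in> A"
        using psubset.prems \<open>x\<^sub>0 \<in> X\<close> by fastforce
      ultimately show ?thesis
        using that by blast
    qed (use that in blast)
    then have X_eq: "X = ?above \<union> ?slices"
      by blast
    have "finitely_based ?above"
      using \<open>x\<^sub>0 \<in> X\<close> unfolding finitely_based_def by (intro exI[of _ "{x\<^sub>0}"]) auto
    moreover have "finitely_based ?slices"
      using psubset.hyps slice by (intro finitely_based_UN) auto
    ultimately show ?thesis
      by (subst X_eq) (rule finitely_based_Un)
  qed
qed

lemma finitely_based_nontrivial_relations:
  assumes "finite (atoms S)"
  shows "finitely_based {(\<alpha>, \<gamma>) \<in> simS S. \<alpha> \<noteq> \<gamma>}"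
proof (rule finitely_based_reflect[where h = "\<lambda>(\<alpha>, \<gamma>). case_sum \<alpha> \<gamma>"])
  show "finitely_based ((\<lambda>(\<alpha>, \<gamma>). case_sum \<alpha> \<gamma>) ` {(\<alpha>, \<gamma>) \<in> simS S. \<alpha> \<noteq> \<gamma>})"
    using assms by (intro finitely_based_finite_support[where A = "Inl ` atoms S \<union> Inr ` atoms S"])
      (auto simp: simS_def freeM_def split: sum.split)
next
  fix p q :: "(('i \<Rightarrow> int) \<Rightarrow> nat) \<times> (('i \<Rightarrow> int) \<Rightarrow> nat)"
  assume "(case p of (\<alpha>, \<gamma>) \<Rightarrow> case_sum \<alpha> \<gamma>) \<le> (case q of (\<alpha>, \<gamma>) \<Rightarrow> case_sum \<alpha> \<gamma>)"
  then have "case_sum (fst p) (snd p) x \<le> case_sum (fst q) (snd q) x" for x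
    by (simp add: le_fun_def split_beta)
  from this[of "Inl _"] this[of "Inr _"] show "p \<le> q"
    by (simp add: less_eq_prod_def le_fun_def)
qed

lemma sum_diff_fun_less:
  fixes \<alpha> \<gamma> u v :: "'a \<Rightarrow> nat"
  assumes "finite A" and "u \<le> \<alpha>" and "v \<le> \<gamma>" and "b \<in> A" and "0 < u b + v b"
  shows "(\<Sum>a \<in> A. (\<alpha> - u) a + (\<gamma> - v) a) < (\<Sum>a \<in> A. \<alpha> a + \<gamma> a)"
proof (rule sum_strict_mono_ex1[OF assms(1)])
  show "\<forall>a \<in> A. (\<alpha> - u) a + (\<gamma> - v) a \<le> \<alpha> a + \<gamma> a"
    by (simp add: add_mono)
  have "u b \<le> \<alpha> b" "v b \<le> \<gamma> b"
    using assms(2,3) by (simp_all add: le_funD)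
  with assms(4,5) show "\<exists>a \<in> A. (\<alpha> - u) a + (\<gamma> - v) a < \<alpha> a + \<gamma> a"
    by (intro bexI[of _ b]) auto
qed

text \<open>\<open>\<alpha> = u + (\<alpha> - u) \<rightarrow> v + (\<alpha> - u) \<rightarrow>\<^sup>* v + (\<gamma> - v) = \<gamma>\<close>.\<close>
lemma rtrancl_gr_step_from_reduction:
  assumes "(u, v) \<in> gr_step S deg d" and "u \<le> \<alpha>" and "v \<le> \<gamma>" and "\<alpha> \<in> freeM S"
    and "(\<alpha> - u, \<gamma> - v) \<in> (gr_step S deg d)\<^sup>*"
  shows "(\<alpha>, \<gamma>) \<in> (gr_step S deg d)\<^sup>*"
proof -
  have \<alpha>: "\<alpha> = madd u (\<alpha> - u)" and \<gamma>: "\<gamma> = madd v (\<gamma> - v)"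
    using assms(2,3) by (simp_all add: madd_diff_cancel)
  have "v \<in> freeM S"
    using assms(1) gr_step_subset by blast
  with assms(5) have "(madd (\<alpha> - u) v, madd (\<gamma> - v) v) \<in> (gr_step S deg d)\<^sup>*"
    by (rule rtrancl_gr_step_madd_right)
  then have "(madd v (\<alpha> - u), \<gamma>) \<in> (gr_step S deg d)\<^sup>*"
    by (simp add: madd_commute flip: \<gamma>)
  moreover have "(\<alpha>, madd v (\<alpha> - u)) \<in> gr_step S deg d"
    using gr_step_madd_right[OF assms(1) diff_freeM[OF assms(4), of u]] by (simp flip: \<alpha>)
  ultimately show ?thesis
    by (rule converse_rtrancl_into_rtrancl[rotated])
qed

lemma simS_subset_rtrancl_gr_step:
  assumes "finite (atoms S)"
    and dominates: "\<forall>(\<alpha>, \<gamma>) \<in> simS S. \<alpha> \<noteq> \<gamma> \<longrightarrow>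
      (\<exists>(u, v) \<in> bounded_relations S deg d. u \<noteq> v \<and> u \<le> \<alpha> \<and> v \<le> \<gamma>)"
  shows "simS S \<subseteq> (gr_step S deg d)\<^sup>*"
proof clarify
  fix \<alpha> \<gamma>
  assume "(\<alpha>, \<gamma>) \<in> simS S"
  then show "(\<alpha>, \<gamma>) \<in> (gr_step S deg d)\<^sup>*"
  proof (induction "\<Sum>a \<in> atoms S. \<alpha> a + \<gamma> a" arbitrary: \<alpha> \<gamma> rule: less_induct)
    case less
    show ?case
    proof (cases "\<alpha> = \<gamma>")
      case False
      with dominates less.prems obtain u v where uv: "(u, v) \<in> bounded_relations S deg d"
        and "u \<noteq> v" "u \<le> \<alpha>" "v \<le> \<gamma>"
        by auto
      then have "(u, v) \<in> simS S"
        by (simp add: bounded_relations_def)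
      with less.prems \<open>u \<le> \<alpha>\<close> \<open>v \<le> \<gamma>\<close> have "(\<alpha> - u, \<gamma> - v) \<in> simS S"
        using simS_madd_cancel[of u "\<alpha> - u" v "\<gamma> - v"] by (simp add: madd_diff_cancel)
      moreover have "(\<Sum>a \<in> atoms S. (\<alpha> - u) a + (\<gamma> - v) a) < (\<Sum>a \<in> atoms S. \<alpha> a + \<gamma> a)"
      proof -
        obtain b where "u b \<noteq> v b"
          using \<open>u \<noteq> v\<close> by (meson ext)
        then have "b \<in> atoms S"
          using \<open>(u, v) \<in> simS S\<close> unfolding simS_def freeM_def by fastforce
        moreover have "0 < u b + v b"
          using \<open>u b \<noteq> v b\<close> by linarith
        ultimately show ?thesis
          by (rule sum_diff_fun_less[OF assms(1) \<open>u \<le> \<alpha>\<close> \<open>v \<le> \<gamma>\<close>])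
      qed
      ultimately have "(\<alpha> - u, \<gamma> - v) \<in> (gr_step S deg d)\<^sup>*"
        using less.hyps by blast
      moreover have "(u, v) \<in> gr_step S deg d"
        using bounded_relations_subset_gr_step uv by blast
      moreover have "\<alpha> \<in> freeM S"
        using less.prems by (simp add: simS_def)
      ultimately show ?thesis
        using \<open>u \<le> \<alpha>\<close> \<open>v \<le> \<gamma>\<close> by (blast intro: rtrancl_gr_step_from_reduction)
    qed simp
  qed
qed

lemma has_gr_chains_exists:
  assumes "finite (atoms S)"
  shows "\<exists>d. has_gr_chains S deg d"
proof -
  obtain F where F: "F \<subseteq> {(\<alpha>, \<gamma>) \<in> simS S. \<alpha> \<noteq> \<gamma>}" "finite F"
    and dominated: "\<forall>p \<in> {(\<alpha>, \<gamma>) \<in> simS S. \<alpha> \<noteq> \<gamma>}. \<exists>q \<in> F. q \<le> p"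
    using finitely_based_nontrivial_relations[OF assms] unfolding finitely_based_def by auto
  define d where "d = Max (insert 0 ((\<lambda>(u, v). max (gr_deg S deg u) (gr_deg S deg v)) ` F))"
  have "F \<subseteq> bounded_relations S deg d"
  proof clarify
    fix u v
    assume "(u, v) \<in> F"
    then have "max (gr_deg S deg u) (gr_deg S deg v) \<le> d"
      unfolding d_def using F(2) by (intro Max_ge) force+
    with F(1) \<open>(u, v) \<in> F\<close> show "(u, v) \<in> bounded_relations S deg d"
      by (auto simp: bounded_relations_def)
  qed
  moreover have "\<exists>(u, v) \<in> F. u \<noteq> v \<and> u \<le> \<alpha> \<and> v \<le> \<gamma>"
    if "(\<alpha>, \<gamma>) \<in> simS S" "\<alpha> \<noteq> \<gamma>" for \<alpha> \<gamma>
  proof -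
    from dominated that have "\<exists>q \<in> F. q \<le> (\<alpha>, \<gamma>)"
      by simp
    then obtain q where "q \<in> F" "q \<le> (\<alpha>, \<gamma>)" ..
    with F(1) show ?thesis
      by (cases q) auto
  qed
  ultimately have "simS S \<subseteq> (gr_step S deg d)\<^sup>*"
    by (intro simS_subset_rtrancl_gr_step[OF assms]) blast
  then show ?thesis
    by (auto simp: has_gr_chains_iff_rtrancl)
qed

lemma atoms_finite:
  assumes "affine_monoid S" and "reduced S"
  shows "finite (atoms S)"
proof -
  obtain G where "finite G" and S: "S = mon_gen G"
    using assms(1) unfolding affine_monoid_def by blast
  have units: "units_of_monoid S = {vzero}"
    using assms(2) unfolding reduced_def .
  have "x \<in> atoms S \<longrightarrow> x \<in> G" if "x \<in> mon_gen G" for x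
    using that
  proof (induction rule: mon_gen.induct)
    case zero
    then show ?case
      using units by (simp add: atoms_def)
  next
    case (gen g x)
    have "g \<in> S"
      using S gen.hyps(1) mon_gen.gen[OF _ mon_gen.zero, of g G] by (simp add: vadd_def vzero_def)
    with gen.hyps(2) S units have "vadd g x \<in> atoms S \<longrightarrow> g = vzero \<or> x = vzero"
      unfolding atoms_def by blast
    with gen.hyps(1) gen.IH show ?case
      by (auto simp: vadd_def vzero_def)
  qed
  then have "atoms S \<subseteq> G"
    using S by (auto simp: atoms_def)
  then show ?thesis
    using \<open>finite G\<close> by (rule finite_subset)
qed

theorem proposition3p2:
  fixes S :: "('i::finite \<Rightarrow> int) set" and deg :: "('i \<Rightarrow> int) \<Rightarrow> nat"
  assumes "affine_monoid S" and "reduced S" and "connected_graded S deg"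
  shows "(\<exists>\<Lambda>. \<Lambda> \<subseteq> freeM S \<times> freeM S \<and> cong_gen S \<Lambda> = simS S \<and>
             (\<forall>(\<alpha>, \<gamma>)\<in>\<Lambda>. gr_deg S deg \<alpha> \<le> c_gr S deg \<and> gr_deg S deg \<gamma> \<le> c_gr S deg))
       \<and> (\<forall>d. (\<exists>\<Lambda>. \<Lambda> \<subseteq> freeM S \<times> freeM S \<and> cong_gen S \<Lambda> = simS S \<and>
                (\<forall>(\<alpha>, \<gamma>)\<in>\<Lambda>. gr_deg S deg \<alpha> \<le> d \<and> gr_deg S deg \<gamma> \<le> d))
              \<longrightarrow> c_gr S deg \<le> d)"
proof (intro conjI allI impI)
  let ?c = "c_gr S deg"
  have "\<exists>d. has_gr_chains S deg d"
    using has_gr_chains_exists atoms_finite[OF assms(1,2)] by blast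
  then have "has_gr_chains S deg ?c"
    unfolding c_gr_def by (rule LeastI_ex)
  then have "cong_gen S (bounded_relations S deg ?c) = simS S"
    by (simp add: has_gr_chains_iff_cong_gen)
  moreover have "bounded_relations S deg ?c \<subseteq> freeM S \<times> freeM S"
    by (auto simp: bounded_relations_def simS_def)
  ultimately show "\<exists>\<Lambda>. \<Lambda> \<subseteq> freeM S \<times> freeM S \<and> cong_gen S \<Lambda> = simS S \<and>
      (\<forall>(\<alpha>, \<gamma>)\<in>\<Lambda>. gr_deg S deg \<alpha> \<le> ?c \<and> gr_deg S deg \<gamma> \<le> ?c)"
    by (intro exI[of _ "bounded_relations S deg ?c"]) (auto simp: bounded_relations_def)
next
  fix d
  assume "\<exists>\<Lambda>. \<Lambda> \<subseteq> freeM S \<times> freeM S \<and> cong_gen S \<Lambda> = simS S \<and>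
    (\<forall>(\<alpha>, \<gamma>)\<in>\<Lambda>. gr_deg S deg \<alpha> \<le> d \<and> gr_deg S deg \<gamma> \<le> d)"
  then obtain \<Lambda> where "cong_gen S \<Lambda> = simS S"
    and "\<forall>(\<alpha>, \<gamma>)\<in>\<Lambda>. gr_deg S deg \<alpha> \<le> d \<and> gr_deg S deg \<gamma> \<le> d"
    by blast
  then have "cong_gen S (bounded_relations S deg d) = simS S"
    by (rule cong_gen_bounded_relations_if_generated)
  then have "has_gr_chains S deg d"
    by (simp add: has_gr_chains_iff_cong_gen)
  then show "c_gr S deg \<le> d"
    unfolding c_gr_def by (rule Least_le)
qed

end
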